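(* Let $q$ be a prime power, let $\ell\ge 0$ and $n>1$ be integers. For $\vec{c}=(c_1,\ldots,c_{\ell})\in\mathbb{F}_q^{\ell}$ we have \begin{align*} S_{q}(n;\vec{c}) &=\frac{1}{2}\sum_{\vec{a}\in \mathbb{F}_{q}^{\ell}}[\![\psi_{(1,\vec{a})}(\vec{a})=\vec{c}]\!]\, S_q(n/2;\vec{a}) +I_q\big(n;\phi_n^{-1}(\vec{c})\big)-\frac{1}{2}\sum_{\substack{\vec{b}=(b_0,\ldots,b_\ell)\in \mathbb{F}_{q}^{\ell+1}\\ b_0\neq 0}} I_q\big(n;\psi^{-1}_{\vec{b}}(\vec{c}),\vec{b}\big), \end{align*} where $(1,\vec a)$ denotes the vector $(1,a_1,\ldots,a_\ell)\in\mathbb{F}_q^{\ell+1}$.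
   Context: $\mathbb{F}_q$ is the finite field with $q$ elements, of characteristic $p$. A monic polynomial $f\in\mathbb{F}_q[x]$ is self-reciprocal if $x^{\deg f}f(1/x)=f(x)$. $[\![P]\!]$ is $1$ if $P$ is true and $0$ otherwise. For integers $d\ge1$, $\ell,t\ge 0$, $\vec a=(a_1,\ldots,a_\ell)\in\mathbb{F}_q^\ell$ and $\vec b=(b_0,\ldots,b_{t-1})\in\mathbb{F}_q^{t}$, $I_q(d;\vec a,\vec b)$ is the number of monic irreducible $f\in\mathbb{F}_q[x]$ of degree $d$ with $[x^{d-j}]f=a_j$ for $1\le j\le \ell$ and $[x^j]f=b_j$ for $0\le j\le t-1$; $I_q(d;\vec a)$ is the same with no condition on the low-order coefficients ($t=0$). $S_q(n;\vec a)$ is the number of self-reciprocal monic irreducible $f\in\mathbb{F}_q[x]$ of degree $2n$ with $[x^{2n-j}]f=a_j$ for $1\le j\le\ell$; by convention $S_q(n/2;\vec a)=0$ when $n$ is odd. $\phi_n:\mathbb{F}_q^\ell\to\mathbb{F}_q^\ell$ is the bijection $(g_1,\ldots,g_\ell)\mapsto(f_1,\ldots,f_\ell)$ given by $f_k=\sum_{0\le j\le k/2}\binom{n+2j-k}{j}g_{k-2j}$ for $1\le k\le \ell$, where $g_0=1$ and the binomial coefficients are taken in $\mathbb{F}_q$. (This records the relation between the coefficients $g_k=[x^{n-k}]g$ of a monic $g$ of degree $n$ and $f_k=[x^{2n-k}]f$ where $f(x)=x^ng(x+1/x)$.) For $\vec b=(b_0,b_1,\ldots,b_\ell)\in\mathbb{F}_q^{\ell+1}$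 with $b_0\ne0$, $\psi_{\vec b}:\mathbb{F}_q^\ell\to\mathbb{F}_q^\ell$ is the bijection $\vec a\mapsto\vec c$ with $c_k=a_k+b_0^{-1}b_k+b_0^{-1}\sum_{j=1}^{k-1}a_jb_{k-j}$ for $1\le k\le\ell$; $\phi_n^{-1},\psi_{\vec b}^{-1}$ denote the inverse maps. *)

theory Defs
  imports "HOL-Computational_Algebra.Computational_Algebra"
begin

text \<open>Vectors in F_q^l are lists of length l.  For a = (a_1,...,a_l) we use a!(j-1) = a_j;
  for b = (b_0,...,b_t-1) we use b!j = b_j.  The finite field F_q is a type of class
  finite and field; q = CARD('a).\<close>

definition topc :: "'a::zero poly \<Rightarrow> nat \<Rightarrow> nat \<Rightarrow> 'a" where
  "topc f d j = (if j \<le> d then coeff f (d - j) else 0)"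

definition I_count :: "nat \<Rightarrow> 'a::{finite,field} list \<Rightarrow> 'a list \<Rightarrow> nat" where
  "I_count d a b = card {f :: 'a poly. lead_coeff f = 1 \<and> degree f = d \<and> irreducible f \<and>
      (\<forall>j\<in>{1..length a}. topc f d j = a ! (j - 1)) \<and>
      (\<forall>j<length b. coeff f j = b ! j)}"

text \<open>S_q(n; a): self-reciprocal (x^deg f f(1/x) = f, i.e. reflect_poly f = f) monic
  irreducible of degree 2n.\<close>
definition S_count :: "nat \<Rightarrow> 'a::{finite,field} list \<Rightarrow> nat" where
  "S_count n a = card {f :: 'a poly. lead_coeff f = 1 \<and> degree f = 2 * n \<and> irreducible f \<and>
      reflect_poly f = f \<and>
      (\<forall>j\<in>{1..length a}. topc f (2 * n) j = a ! (j - 1))}"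

definition S_half :: "nat \<Rightarrow> 'a::{finite,field} list \<Rightarrow> nat" where
  "S_half n a = (if even n then S_count (n div 2) a else 0)"

text \<open>Integer binomial coefficient with arbitrary integer top (standard extension
  binom(m,j) = (-1)^j binom(j-m-1,j) for m < 0), then mapped into the field.\<close>
definition ibinom :: "int \<Rightarrow> nat \<Rightarrow> int" where
  "ibinom m j = (if m \<ge> 0 then int (nat m choose j)
                 else (-1) ^ j * int (nat (int j - m - 1) choose j))"

definition phi :: "nat \<Rightarrow> 'a::field list \<Rightarrow> 'a list" where
  "phi n g = map (\<lambda>k. \<Sum>j\<in>{0..k div 2}.
        of_int (ibinom (int n + 2 * int j - int k) j) *
        (if k - 2 * j = 0 then 1 else g ! (k - 2 * j - 1))) [1..<length g + 1]"

definition phi_inv :: "nat \<Rightarrow> 'a::field list \<Rightarrow> 'a list" where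
  "phi_inv n c = inv_into {g. length g = length c} (phi n) c"

definition psi :: "'a::field list \<Rightarrow> 'a list \<Rightarrow> 'a list" where
  "psi b a = map (\<lambda>k. a ! (k - 1) + inverse (b ! 0) * b ! k +
        inverse (b ! 0) * (\<Sum>j\<in>{1..<k}. a ! (j - 1) * b ! (k - j))) [1..<length a + 1]"

definition psi_inv :: "'a::field list \<Rightarrow> 'a list \<Rightarrow> 'a list" where
  "psi_inv b c = inv_into {a. length a = length c} (psi b) c"

end

theory Submission
  imports Defs
begin

text \<open>For monic g of degree n, the transform g' = x^n g(x + 1/x) is monic and self-reciprocal of
  degree 2n; it is multiplicative, and every self-reciprocal polynomial of degree 2n is the
  transform of exactly one g of degree n. If g is irreducible and n \<ge> 2, then g' has no roots, and
  a monic irreducible factor h of g' either equals g' or satisfies g' = h h*, where h* \<noteq> h is the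
  monic reciprocal of h; conversely irreducibility of g' or a factorization g' = h h* forces g to be
  irreducible. Hence the g counted by I(n; phi_n^-1(c)) correspond to the irreducible
  self-reciprocal f counted by S(n; c) together with the products h h*, each of which comes from
  the two factors h, h*. Finally the top coefficients of h h* are psi_b(a) for the top and bottom
  coefficient vectors a, b of h, so summing I(n; psi_b^-1(c), b) over b counts all h, and the
  self-reciprocal h among them, where b = (1, a), are counted by S(n/2; a).\<close>

section \<open>Palindromic polynomials\<close>

definition palindromic :: "nat \<Rightarrow> 'a::zero poly \<Rightarrow> bool" where
  "palindromic d p \<longleftrightarrow> degree p \<le> d \<and> (\<forall>k\<le>d. coeff p k = coeff p (d - k))"

lemma palindromicD: "palindromic d p \<Longrightarrow> k \<le> d \<Longrightarrow> coeff p k = coeff p (d - k)"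
  unfolding palindromic_def by blast

lemma degree_le_if_palindromic: "palindromic d p \<Longrightarrow> degree p \<le> d"
  unfolding palindromic_def by blast

lemma palindromicI:
  "degree p \<le> d \<Longrightarrow> (\<And>k. k \<le> d \<Longrightarrow> coeff p k = coeff p (d - k)) \<Longrightarrow> palindromic d p"
  unfolding palindromic_def by blast

lemma palindromic_0 [simp]: "palindromic d 0"
  by (rule palindromicI) simp_all

lemma palindromic_add:
  assumes "palindromic d p" "palindromic d q"
  shows "palindromic d (p + q)"
proof (rule palindromicI)
  show "degree (p + q) \<le> d"
    using assms by (simp add: degree_add_le degree_le_if_palindromic)
  fix k assume "k \<le> d"
  then show "coeff (p + q) k = coeff (p + q) (d - k)"
    using palindromicD[OF assms(1), of k] palindromicD[OF assms(2), of k] by simp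
qed

lemma palindromic_uminus:
  assumes "palindromic d p"
  shows "palindromic d (- p :: 'a::ab_group_add poly)"
proof (rule palindromicI)
  show "degree (- p) \<le> d" using degree_le_if_palindromic[OF assms] by simp
  fix k assume "k \<le> d"
  then show "coeff (- p) k = coeff (- p) (d - k)" using palindromicD[OF assms, of k] by simp
qed

lemma palindromic_diff:
  "palindromic d p \<Longrightarrow> palindromic d q \<Longrightarrow> palindromic d (p - q :: 'a::ab_group_add poly)"
  using palindromic_add[of d p "- q"] palindromic_uminus[of d q] by simp

lemma palindromic_smult:
  assumes "palindromic d p"
  shows "palindromic d (smult c p)"
proof (rule palindromicI)
  show "degree (smult c p) \<le> d"
    using degree_le_if_palindromic[OF assms] by (meson degree_smult_le order.trans)
  fix k assume "k \<le> d"
  then show "coeff (smult c p) k = coeff (smult c p) (d - k)" using palindromicD[OF assms, of k] by simp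
qed

lemma palindromic_sum:
  "(\<And>i. i \<in> A \<Longrightarrow> palindromic d (f i)) \<Longrightarrow> palindromic d (\<Sum>i\<in>A. f i)"
  by (induction A rule: infinite_finite_induct) (auto intro: palindromic_add)

lemma palindromic_monom_mult:
  fixes p :: "'a::comm_semiring_1 poly"
  assumes "palindromic d p"
  shows "palindromic (d + 2 * i) (monom 1 i * p)"
  unfolding palindromic_def
proof (intro conjI allI impI)
  have "degree p \<le> d" using assms by (rule degree_le_if_palindromic)
  then show "degree (monom 1 i * p) \<le> d + 2 * i"
    using degree_mult_le[of "monom 1 i" p] degree_monom_le[of "1::'a" i] by linarith
  fix k assume "k \<le> d + 2 * i"
  then show "coeff (monom 1 i * p) k = coeff (monom 1 i * p) (d + 2 * i - k)"
    using palindromicD[OF assms, of "k - i"] \<open>degree p \<le> d\<close>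
    by (auto simp: coeff_monom_mult coeff_eq_0) (simp add: add.commute)
qed

lemma palindromic_pCons_0:
  assumes "palindromic d (pCons 0 r)" "d \<ge> 2"
  shows "palindromic (d - 2) r"
proof (rule palindromicI)
  show "degree r \<le> d - 2"
  proof (rule degree_le, intro allI impI)
    fix k assume "d - 2 < k"
    then consider "Suc k = d" | "Suc k > d" using assms(2) by linarith
    then show "coeff r k = 0"
    proof cases
      case 1
      then show ?thesis using palindromicD[OF assms(1), of d] by (metis coeff_pCons_0 coeff_pCons_Suc diff_self_eq_0 order.refl)
    next
      case 2
      then show ?thesis
        using coeff_eq_0[of "pCons 0 r" "Suc k"] degree_le_if_palindromic[OF assms(1)] by simp
    qed
  qed
  fix k assume "k \<le> d - 2"
  moreover from this have "d - Suc k = Suc (d - 2 - k)" using assms(2) by arith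
  ultimately show "coeff r k = coeff r (d - 2 - k)"
    using palindromicD[OF assms(1), of "Suc k"] by simp
qed

lemma reflect_poly_eq_iff_palindromic: "reflect_poly p = p \<longleftrightarrow> palindromic (degree p) p"
proof
  assume p: "reflect_poly p = p"
  show "palindromic (degree p) p"
  proof (rule palindromicI)
    fix k assume "k \<le> degree p"
    then show "coeff p k = coeff p (degree p - k)"
      using coeff_reflect_poly[of p k] p by simp
  qed simp
next
  assume p: "palindromic (degree p) p"
  show "reflect_poly p = p"
  proof (rule poly_eqI)
    fix k
    show "coeff (reflect_poly p) k = coeff p k"
      using palindromicD[OF p, of k] by (cases "k \<le> degree p") (simp_all add: coeff_reflect_poly coeff_eq_0)
  qed
qed

lemma palindromic_odd_poly_minus_one:
  fixes p :: "'a::comm_ring_1 poly"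
  assumes "palindromic d p" "odd d"
  shows "poly p (-1) = 0"
  using assms
proof (induction d arbitrary: p rule: less_induct)
  case (less d)
  \<comment> \<open>x^d + 1 vanishes at -1; removing a multiple of it leaves x times a palindrome of degree d - 2\<close>
  define r where "r = p - smult (coeff p 0) (monom 1 d + 1)"
  have "d \<ge> 1" using less.prems(2) by (cases d) auto
  have "palindromic d (monom 1 d + 1 :: 'a poly)"
    using \<open>d \<ge> 1\<close> by (intro palindromicI) (auto simp: coeff_monom degree_add_le degree_monom_le)
  then have r: "palindromic d r" unfolding r_def by (intro palindromic_diff palindromic_smult less.prems)
  have "coeff r 0 = 0" using \<open>d \<ge> 1\<close> by (simp add: r_def coeff_monom)
  then obtain r' where r': "r = pCons 0 r'" by (cases r) auto
  have "poly r (-1) = 0"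
  proof (cases "d = 1")
    case True
    have "coeff r 1 = 0" using palindromicD[OF r, of 1] True \<open>coeff r 0 = 0\<close> by simp
    moreover have "degree r \<le> 1" using degree_le_if_palindromic[OF r] True by simp
    ultimately have "coeff r k = 0" for k
      using \<open>coeff r 0 = 0\<close> coeff_eq_0[of r k] by (cases "k \<le> 1") (auto simp: le_Suc_eq)
    then have "r = 0" by (intro poly_eqI) simp
    then show ?thesis by simp
  next
    case False
    then have "palindromic (d - 2) r'"
      using palindromic_pCons_0[of d r'] r r' \<open>d \<ge> 1\<close> by simp
    then have "poly r' (-1) = 0"
      using less.IH[of "d - 2"] less.prems(2) False \<open>d \<ge> 1\<close> by simp
    then show ?thesis by (simp add: r')
  qed
  then show ?case
    using less.prems(2) by (simp add: r_def poly_monom)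
qed

section \<open>The self-reciprocal transform x^n g(x + 1/x)\<close>

lemma coeff_mult_X2_plus_1:
  fixes p :: "'a::comm_semiring_1 poly"
  shows "coeff ([:1, 0, 1:] * p) t = coeff p t + (if t \<ge> 2 then coeff p (t - 2) else 0)"
  by (cases t; cases "t - 1") (auto simp: mult_pCons_left coeff_pCons split: nat.splits)

lemma coeff_X2_plus_1_power:
  "coeff ([:1, 0, 1:] ^ m :: 'a::comm_semiring_1 poly) t =
     (if even t then of_nat (m choose (t div 2)) else 0)"
proof (induction m arbitrary: t)
  case 0
  then show ?case by (auto simp: coeff_1 binomial_eq_0 elim!: evenE)
next
  case (Suc m)
  show ?case
  proof (cases "t \<ge> 2")
    case True
    then obtain s where "t = Suc (Suc s)" by (metis add_2_eq_Suc le_Suc_ex)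
    then show ?thesis using Suc by (auto simp: coeff_mult_X2_plus_1 binomial_Suc_Suc add.commute)
  next
    case False
    then have "t = 0 \<or> t = 1" by auto
    then show ?thesis using Suc by (auto simp: coeff_mult_X2_plus_1)
  qed
qed

lemma palindromic_X2_plus_1_power: "palindromic (2 * m) ([:1, 0, 1:] ^ m :: 'a::comm_semiring_1 poly)"
proof (rule palindromicI)
  show "degree ([:1, 0, 1:] ^ m :: 'a poly) \<le> 2 * m"
    using degree_power_le[of "[:1, 0, 1:] :: 'a poly" m] by simp
  fix k assume k: "k \<le> 2 * m"
  show "coeff ([:1, 0, 1:] ^ m :: 'a poly) k = coeff ([:1, 0, 1:] ^ m) (2 * m - k)"
  proof (cases "even k")
    case True
    then obtain j where "k = 2 * j" by blast
    moreover have "2 * m - 2 * j = 2 * (m - j)" by simp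
    ultimately show ?thesis using k by (simp add: coeff_X2_plus_1_power binomial_symmetric[of j m])
  qed (use k in \<open>simp add: coeff_X2_plus_1_power\<close>)
qed

definition sr_transform :: "nat \<Rightarrow> 'a::comm_semiring_1 poly \<Rightarrow> 'a poly" where
  "sr_transform n g = (\<Sum>i\<le>n. smult (coeff g (n - i)) (monom 1 i * [:1, 0, 1:] ^ (n - i)))"

lemma palindromic_sr_transform: "palindromic (2 * n) (sr_transform n g)"
  unfolding sr_transform_def
proof (intro palindromic_sum palindromic_smult)
  fix i assume "i \<in> {..n}"
  then have "2 * (n - i) + 2 * i = 2 * n" by simp
  then show "palindromic (2 * n) (monom 1 i * [:1, 0, 1:] ^ (n - i))"
    using palindromic_monom_mult[OF palindromic_X2_plus_1_power[of "n - i"], of i] by simp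
qed

text \<open>This is the sum by which phi is defined, with the top coefficients of g in place of its
  argument.\<close>

lemma coeff_sr_transform:
  "coeff (sr_transform n g) k =
     (\<Sum>j\<le>k div 2. of_nat ((n + 2 * j - k) choose j) * topc g n (k - 2 * j))"
proof -
  define F where "F i = (if i \<le> n \<and> i \<le> k \<and> even (k - i)
      then coeff g (n - i) * of_nat ((n - i) choose ((k - i) div 2)) else 0)" for i
  define h where "h j = k - 2 * j" for j
  have "coeff (sr_transform n g) k = (\<Sum>i\<le>n. F i)"
    unfolding sr_transform_def
    by (auto simp: coeff_sum coeff_monom_mult coeff_X2_plus_1_power F_def intro!: sum.cong)
  also have "\<dots> = (\<Sum>i\<le>n + k. F i)"
    by (rule sum.mono_neutral_left) (auto simp: F_def)
  also have "\<dots> = (\<Sum>i\<in>h ` {..k div 2}. F i)"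
  proof (rule sum.mono_neutral_right)
    show "\<forall>i\<in>{..n + k} - h ` {..k div 2}. F i = 0"
    proof (intro ballI)
      fix i assume i: "i \<in> {..n + k} - h ` {..k div 2}"
      show "F i = 0"
      proof (rule ccontr)
        assume "F i \<noteq> 0"
        then have "even (k - i)" "i \<le> k" by (auto simp: F_def split: if_splits)
        then have "i = h ((k - i) div 2)" "(k - i) div 2 \<in> {..k div 2}"
          by (auto simp: h_def div_le_mono elim!: evenE)
        then show False using i by blast
      qed
    qed
  qed (auto simp: h_def)
  also have "\<dots> = (\<Sum>j\<le>k div 2. F (h j))"
    by (rule sum.reindex_cong[of h]) (auto simp: h_def inj_on_def)
  also have "\<dots> = (\<Sum>j\<le>k div 2. of_nat ((n + 2 * j - k) choose j) * topc g n (k - 2 * j))"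
    by (rule sum.cong) (auto simp: F_def h_def topc_def mult.commute)
  finally show ?thesis .
qed

lemma coeff_0_sr_transform [simp]: "coeff (sr_transform n g) 0 = coeff g n"
  by (simp add: coeff_sr_transform topc_def)

lemma coeff_sr_transform_double [simp]: "coeff (sr_transform n g) (2 * n) = coeff g n"
  using palindromicD[OF palindromic_sr_transform, of "2 * n" n g] by simp

lemma degree_sr_transform: "coeff g n \<noteq> 0 \<Longrightarrow> degree (sr_transform n g) = 2 * n"
  using degree_le_if_palindromic[OF palindromic_sr_transform, of n g] le_degree[of "sr_transform n g" "2 * n"]
  by simp

lemma lead_coeff_sr_transform: "coeff g n \<noteq> 0 \<Longrightarrow> lead_coeff (sr_transform n g) = coeff g n"
  by (simp add: degree_sr_transform)

lemma reflect_poly_sr_transform: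
  "coeff g n \<noteq> 0 \<Longrightarrow> reflect_poly (sr_transform n g) = sr_transform n g"
  using palindromic_sr_transform[of n g] by (simp add: reflect_poly_eq_iff_palindromic degree_sr_transform)

lemma sr_transform_add: "sr_transform n (p + q) = sr_transform n p + sr_transform n q"
  by (simp add: sr_transform_def smult_add_left sum.distrib)

lemma sr_transform_diff:
  "sr_transform n (p - q :: 'a::comm_ring_1 poly) = sr_transform n p - sr_transform n q"
  by (simp add: sr_transform_def smult_diff_left sum_subtractf)

lemma smult_sum_right: "smult a (\<Sum>i\<in>A. f i) = (\<Sum>i\<in>A. smult a (f i))"
  by (induction A rule: infinite_finite_induct) (simp_all add: smult_add_right)

lemma sr_transform_smult: "sr_transform n (smult a p) = smult a (sr_transform n p)"
  by (simp add: sr_transform_def smult_sum_right)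

lemma sr_transform_pCons_0: "sr_transform (Suc n) (pCons 0 g) = [:1, 0, 1:] * sr_transform n g"
proof -
  have "sr_transform (Suc n) (pCons 0 g) =
      (\<Sum>i\<le>n. smult (coeff (pCons 0 g) (Suc n - i)) (monom 1 i * [:1, 0, 1:] ^ (Suc n - i)))"
    by (simp add: sr_transform_def)
  also have "\<dots> = (\<Sum>i\<le>n. [:1, 0, 1:] * smult (coeff g (n - i)) (monom 1 i * [:1, 0, 1:] ^ (n - i)))"
    by (intro sum.cong refl) (auto simp: Suc_diff_le mult_ac)
  finally show ?thesis by (simp add: sr_transform_def sum_distrib_left)
qed

lemma sr_transform_shift:
  assumes "degree g \<le> n"
  shows "sr_transform (n + k) g = monom 1 k * sr_transform n g"
proof (induction k)
  case (Suc k)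
  have "coeff g (Suc (n + k)) = 0" using assms by (simp add: coeff_eq_0)
  then have "sr_transform (Suc (n + k)) g =
      (\<Sum>i\<le>n + k. smult (coeff g (n + k - i)) (monom 1 (Suc i) * [:1, 0, 1:] ^ (n + k - i)))"
    unfolding sr_transform_def sum.atMost_Suc_shift by simp
  also have "\<dots> = monom 1 1 * sr_transform (n + k) g"
    by (simp add: sr_transform_def sum_distrib_left mult.assoc[symmetric] mult_monom)
  finally show ?case using Suc by (simp add: mult.assoc[symmetric] mult_monom)
qed simp

lemma sr_transform_mult:
  "degree g \<le> m \<Longrightarrow> degree h \<le> n \<Longrightarrow>
    sr_transform (m + n) (g * h) = sr_transform m g * sr_transform n h"
proof (induction g arbitrary: m rule: pCons_induct)
  case 0
  then show ?case by (simp add: sr_transform_def)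
next
  case (pCons a g)
  show ?case
  proof (cases m)
    case 0
    then have "g = 0" using pCons by (auto split: if_splits)
    then show ?thesis using 0 sr_transform_smult[of n a h] by (simp add: sr_transform_def[of 0])
  next
    case (Suc m')
    have "degree g \<le> m'" using pCons Suc by (auto split: if_splits)
    have const: "sr_transform k [:c:] = monom c k" for k c
      using sr_transform_shift[of "[:c:]" 0 k] by (simp add: sr_transform_def smult_monom)
    have "sr_transform (m + n) (pCons a g * h) =
        sr_transform (m + n) (smult a h) + sr_transform (Suc (m' + n)) (pCons 0 (g * h))"
      using Suc by (simp add: sr_transform_add)
    also have "sr_transform (m + n) (smult a h) = monom a m * sr_transform n h"
      using sr_transform_shift[OF pCons.prems(2), of m]
      by (simp add: sr_transform_smult add.commute smult_monom flip: mult_smult_left)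
    also have "sr_transform (Suc (m' + n)) (pCons 0 (g * h)) =
        [:1, 0, 1:] * (sr_transform m' g * sr_transform n h)"
      using pCons.IH[OF \<open>degree g \<le> m'\<close> pCons.prems(2)] by (simp add: sr_transform_pCons_0)
    also have "monom a m * sr_transform n h + [:1, 0, 1:] * (sr_transform m' g * sr_transform n h) =
        sr_transform m (pCons a g) * sr_transform n h"
      using sr_transform_add[of m "[:a:]" "pCons 0 g"] Suc
      by (simp add: const sr_transform_pCons_0 algebra_simps)
    finally show ?thesis .
  qed
qed

lemma sr_transform_mult_degree:
  fixes a b :: "'a::idom poly"
  assumes "a \<noteq> 0" "b \<noteq> 0"
  shows "sr_transform (degree (a * b)) (a * b) = sr_transform (degree a) a * sr_transform (degree b) b"
  using sr_transform_mult[of a "degree a" b "degree b"] assms by (simp add: degree_mult_eq)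

lemma sr_transform_eq_0_iff:
  assumes "degree p \<le> n"
  shows "sr_transform n p = 0 \<longleftrightarrow> p = 0"
proof
  assume "sr_transform n p = 0"
  moreover have "sr_transform n p = monom 1 (n - degree p) * sr_transform (degree p) p"
    using sr_transform_shift[of p "degree p" "n - degree p"] assms by simp
  ultimately have "coeff (sr_transform (degree p) p) 0 = 0"
    using coeff_monom_mult[of 1 "n - degree p" "sr_transform (degree p) p" "n - degree p"] by simp
  then show "p = 0" by simp
qed (simp add: sr_transform_def)

lemma sr_transform_inj:
  fixes p q :: "'a::comm_ring_1 poly"
  assumes "degree p \<le> n" "degree q \<le> n" "sr_transform n p = sr_transform n q"
  shows "p = q"
  using sr_transform_eq_0_iff[of "p - q" n] assms by (simp add: sr_transform_diff degree_diff_le)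

lemma palindromic_imp_sr_transform:
  fixes p :: "'a::comm_ring_1 poly"
  assumes "palindromic (2 * n) p"
  shows "\<exists>g. degree g \<le> n \<and> sr_transform n g = p"
  using assms
proof (induction n arbitrary: p)
  case 0
  then have "degree p = 0" using degree_le_if_palindromic by fastforce
  then obtain c where "p = [:c:]" by (rule degree_eq_zeroE)
  then have "sr_transform 0 [:c:] = p" by (simp add: sr_transform_def)
  then show ?case by (metis degree_pCons_0 le_refl)
next
  case (Suc n)
  \<comment> \<open>subtracting the transform of c x^(n+1) kills the constant term, leaving x times a palindrome\<close>
  define c where "c = coeff p 0"
  define r where "r = p - sr_transform (Suc n) (monom c (Suc n))"
  have r: "palindromic (2 * Suc n) r"
    unfolding r_def using Suc.prems palindromic_sr_transform by (rule palindromic_diff)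
  have "coeff r 0 = 0" by (simp add: r_def c_def)
  then obtain r' where r': "r = pCons 0 r'" by (cases r) auto
  then have "palindromic (2 * n) r'" using palindromic_pCons_0[of "2 * Suc n" r'] r by simp
  then obtain g where g: "degree g \<le> n" "sr_transform n g = r'" using Suc.IH by blast
  have "r = sr_transform (Suc n) g"
    using r' g sr_transform_shift[of g n 1] by (simp add: monom_Suc monom_0)
  then have "p = sr_transform (Suc n) (monom c (Suc n) + g)" by (simp add: r_def sr_transform_add diff_eq_eq)
  moreover have "degree (monom c (Suc n) + g) \<le> Suc n"
    using g by (intro degree_add_le) (auto simp: degree_monom_le)
  ultimately show ?case by blast
qed

lemma self_reciprocal_imp_sr_transform:
  fixes q :: "'a::comm_ring_1 poly"
  assumes "reflect_poly q = q" "q \<noteq> 0" "degree q = 2 * e"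
  obtains g where "degree g = e" "lead_coeff g = lead_coeff q" "sr_transform e g = q"
proof -
  have "palindromic (2 * e) q" using assms(1,3) reflect_poly_eq_iff_palindromic by metis
  then obtain g where g: "degree g \<le> e" "sr_transform e g = q" using palindromic_imp_sr_transform by blast
  have "coeff g e = lead_coeff q"
    using g(2) coeff_0_sr_transform[of e g] coeff_0_reflect_poly[of q] assms(1) by simp
  moreover from this have "degree g = e" using g(1) assms(2) le_degree[of g e] by simp
  ultimately show ?thesis using that g(2) by simp
qed

lemma poly_sr_transform:
  fixes x :: "'a::field"
  assumes "x \<noteq> 0" "degree g \<le> n"
  shows "poly (sr_transform n g) x = x ^ n * poly g (x + inverse x)"
proof -
  define y where "y = x + inverse x"
  have "x * y = 1 + x * x" using assms(1) by (simp add: y_def field_simps)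
  then have "poly (sr_transform n g) x = (\<Sum>i\<le>n. coeff g (n - i) * (x ^ i * (x * y) ^ (n - i)))"
    by (simp add: sr_transform_def poly_sum poly_monom mult_ac)
  also have "\<dots> = x ^ n * (\<Sum>i\<le>n. coeff g (n - i) * y ^ (n - i))"
    unfolding sum_distrib_left by (intro sum.cong refl) (simp add: power_mult_distrib mult_ac flip: power_add)
  also have "(\<Sum>i\<le>n. coeff g (n - i) * y ^ (n - i)) = (\<Sum>i\<le>n. coeff g i * y ^ i)"
    by (rule sum.reindex_bij_witness[of _ "\<lambda>i. n - i" "\<lambda>i. n - i"]) auto
  also have "\<dots> = poly g y"
    using arg_cong[OF poly_as_sum_of_monoms'[OF assms(2)], of "\<lambda>p. poly p y"] by (simp add: poly_sum poly_monom)
  finally show ?thesis by (simp add: y_def)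
qed

section \<open>Irreducible polynomials and monic reciprocals\<close>

lemma coeff_0_nonzero_if_irreducible:
  fixes p :: "'a::field poly"
  shows "irreducible p \<Longrightarrow> degree p \<ge> 2 \<Longrightarrow> coeff p 0 \<noteq> 0"
  using root_imp_reducible_poly[of p 0] by (auto simp: poly_0_coeff_0)

lemma degree_one_imp_root:
  fixes p :: "'a::field poly"
  assumes "degree p = 1"
  shows "\<exists>x. poly p x = 0"
proof -
  have p: "p = [:coeff p 0, coeff p 1:]"
    using assms by (intro poly_eqI) (auto simp: coeff_pCons coeff_eq_0 split: nat.splits)
  have "p \<noteq> 0" using assms by auto
  then have "coeff p 1 \<noteq> 0" using assms leading_coeff_0_iff[of p] by simp
  then have "poly p (- coeff p 0 / coeff p 1) = 0" by (subst p) (simp add: field_simps)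
  then show ?thesis by blast
qed

lemma monic_irreducible_factor_exists:
  fixes a :: "'a::field poly"
  assumes "degree a > 0"
  obtains h where "irreducible h" "lead_coeff h = 1" "h dvd a"
  using assms
proof (induction "degree a" arbitrary: a rule: less_induct)
  case less
  have "a \<noteq> 0" using less.prems(2) by auto
  then have "\<not> is_unit a" using less.prems(2) by (simp add: is_unit_iff_degree)
  show ?case
  proof (cases "irreducible a")
    case True
    have "is_unit [:inverse (lead_coeff a):]" using \<open>a \<noteq> 0\<close> by (simp add: is_unit_pCons_iff)
    then have "irreducible ([:inverse (lead_coeff a):] * a)"
      using True by (simp only: irreducible_mult_unit_left)
    then show ?thesis using less.prems(1) \<open>a \<noteq> 0\<close> by (simp add: smult_dvd)
  next
    case False
    then obtain b c where bc: "a = b * c" "\<not> is_unit b" "\<not> is_unit c"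
      using \<open>a \<noteq> 0\<close> \<open>\<not> is_unit a\<close> by (auto simp: irreducible_def)
    then have "b \<noteq> 0" "c \<noteq> 0" using \<open>a \<noteq> 0\<close> by auto
    then have "0 < degree b" "degree b < degree a"
      using bc is_unit_iff_degree by (auto simp: degree_mult_eq)
    show ?thesis
    proof (rule less.hyps[of b])
      fix h assume "irreducible h" "lead_coeff h = 1" "h dvd b"
      then show thesis using less.prems(1) bc(1) by auto
    qed fact+
  qed
qed

lemma monic_irreducible_dvd_imp_eq:
  fixes h k :: "'a::field poly"
  assumes "irreducible h" "irreducible k" "lead_coeff h = 1" "lead_coeff k = 1" "k dvd h"
  shows "k = h"
proof -
  obtain u where u: "h = k * u" using assms(5) by (auto elim: dvdE)
  have "\<not> is_unit k" using assms(2) by (auto simp: irreducible_def)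
  then have "is_unit u" using irreducibleD[OF assms(1) u] by blast
  then obtain c where "u = [:c:]" by (auto elim: is_unit_polyE' simp: monom_0)
  moreover have "lead_coeff u = 1" using u assms(3,4) by (simp add: lead_coeff_mult)
  ultimately show ?thesis using u by (simp add: one_pCons[symmetric])
qed

definition reciprocal :: "'a::field poly \<Rightarrow> 'a poly" where
  "reciprocal h = smult (inverse (coeff h 0)) (reflect_poly h)"

lemma degree_reciprocal [simp]: "coeff h 0 \<noteq> 0 \<Longrightarrow> degree (reciprocal h) = degree h"
  by (simp add: reciprocal_def)

lemma lead_coeff_reciprocal [simp]: "coeff h 0 \<noteq> 0 \<Longrightarrow> lead_coeff (reciprocal h) = 1"
  by (simp add: reciprocal_def coeff_reflect_poly)

lemma reciprocal_reciprocal [simp]: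
  "coeff h 0 \<noteq> 0 \<Longrightarrow> lead_coeff h = 1 \<Longrightarrow> reciprocal (reciprocal h) = h"
  by (simp add: reciprocal_def reflect_poly_smult)

lemma reciprocal_eq_self_if_reflect_poly_eq:
  "reflect_poly h = h \<Longrightarrow> lead_coeff h = 1 \<Longrightarrow> reciprocal h = h"
  using coeff_0_reflect_poly[of h] by (simp add: reciprocal_def)

lemma degree_mult_reciprocal:
  "coeff h 0 \<noteq> 0 \<Longrightarrow> degree (h * reciprocal h) = 2 * degree h"
  by (subst degree_mult_eq) (auto simp: reciprocal_def)

lemma lead_coeff_mult_reciprocal:
  "lead_coeff h = 1 \<Longrightarrow> coeff h 0 \<noteq> 0 \<Longrightarrow> lead_coeff (h * reciprocal h) = 1"
  using lead_coeff_mult[of h "reciprocal h"] lead_coeff_reciprocal[of h] by simp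

lemma reflect_poly_mult_reciprocal:
  "coeff h 0 \<noteq> 0 \<Longrightarrow> reflect_poly (h * reciprocal h) = h * reciprocal h"
  by (simp add: reciprocal_def reflect_poly_mult reflect_poly_smult mult.commute)

lemma irreducible_reflect_poly:
  fixes h :: "'a::field poly"
  assumes "irreducible h" "coeff h 0 \<noteq> 0"
  shows "irreducible (reflect_poly h)"
proof (rule irreducibleI)
  have "h \<noteq> 0" using assms(1) by auto
  then show "reflect_poly h \<noteq> 0" by simp
  show "\<not> is_unit (reflect_poly h)"
    using assms \<open>h \<noteq> 0\<close> irreducible_not_unit[OF assms(1)] by (simp add: is_unit_iff_degree)
  fix a b assume ab: "reflect_poly h = a * b"
  then have "coeff a 0 * coeff b 0 = lead_coeff h" by (metis coeff_0_reflect_poly coeff_mult_0)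
  then have "coeff a 0 \<noteq> 0" "coeff b 0 \<noteq> 0" "a \<noteq> 0" "b \<noteq> 0" using \<open>h \<noteq> 0\<close> by auto
  have "h = reflect_poly a * reflect_poly b"
    using ab assms(2) by (metis reflect_poly_mult reflect_poly_reflect_poly)
  then have "is_unit (reflect_poly a) \<or> is_unit (reflect_poly b)" using irreducibleD[OF assms(1)] by blast
  then show "is_unit a \<or> is_unit b"
    using \<open>coeff a 0 \<noteq> 0\<close> \<open>coeff b 0 \<noteq> 0\<close> \<open>a \<noteq> 0\<close> \<open>b \<noteq> 0\<close> by (auto simp: is_unit_iff_degree)
qed

lemma irreducible_reciprocal:
  fixes h :: "'a::field poly"
  assumes "irreducible h" "coeff h 0 \<noteq> 0"
  shows "irreducible (reciprocal h)"
proof -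
  have "is_unit [:inverse (coeff h 0):]" using assms(2) by (simp add: is_unit_pCons_iff)
  then have "irreducible ([:inverse (coeff h 0):] * reflect_poly h)"
    using irreducible_reflect_poly[OF assms] by (simp only: irreducible_mult_unit_left)
  then show ?thesis by (simp add: reciprocal_def)
qed

lemma reciprocal_dvd_if_reflect_poly_eq:
  fixes h f :: "'a::field poly"
  assumes "h dvd f" "reflect_poly f = f" "coeff h 0 \<noteq> 0"
  shows "reciprocal h dvd f"
proof -
  obtain k where "f = h * k" using assms(1) by (auto elim: dvdE)
  then have "f = reflect_poly h * reflect_poly k" using assms(2) by (metis reflect_poly_mult)
  then show ?thesis using assms(3) by (simp add: reciprocal_def smult_dvd)
qed

lemma reflect_poly_eq_if_reciprocal_eq:
  fixes h :: "'a::field poly"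
  assumes irr: "irreducible h" and "lead_coeff h = 1" "degree h \<ge> 2" "reciprocal h = h"
  shows "reflect_poly h = h"
proof -
  define c where "c = coeff h 0"
  have "c \<noteq> 0" using coeff_0_nonzero_if_irreducible[OF irr assms(3)] by (simp add: c_def)
  then have r: "reflect_poly h = smult c h"
    using assms(4) unfolding reciprocal_def c_def by (metis smult_smult right_inverse smult_1_left)
  have "h = reflect_poly (reflect_poly h)" using \<open>c \<noteq> 0\<close> by (simp add: c_def)
  also have "\<dots> = smult (c * c) h" using r by (simp add: reflect_poly_smult)
  finally have "c * c = 1" using assms(2) by (metis lead_coeff_smult mult.right_neutral)
  \<comment> \<open>c = -1 is impossible: then the characteristic is not 2 and h(1) = c h(1) forces h(1) = 0\<close>
  have "c = 1"
  proof (rule ccontr)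
    assume "c \<noteq> 1"
    have "(c - 1) * (c + 1) = 0" using \<open>c * c = 1\<close> by (simp add: algebra_simps)
    then have "c = -1" using \<open>c \<noteq> 1\<close> by (simp add: eq_neg_iff_add_eq_0)
    then have "(1 + 1 :: 'a) \<noteq> 0" using \<open>c \<noteq> 1\<close> by (metis add_eq_0_iff)
    have "poly h 1 = - poly h 1" using r \<open>c = -1\<close> poly_reflect_poly_nz[of 1 h] by simp
    then have "(1 + 1) * poly h 1 = 0" by (simp add: algebra_simps)
    then have "poly h 1 = 0" using \<open>(1 + 1 :: 'a) \<noteq> 0\<close> by simp
    then show False using root_imp_reducible_poly[of h 1] irr assms(3) by simp
  qed
  then show ?thesis using r by simp
qed

lemma even_degree_if_reflect_poly_eq:
  fixes h :: "'a::field poly"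
  assumes "irreducible h" "degree h \<ge> 2" "reflect_poly h = h"
  shows "even (degree h)"
proof (rule ccontr)
  assume "odd (degree h)"
  then have "poly h (-1) = 0"
    using assms(3) reflect_poly_eq_iff_palindromic palindromic_odd_poly_minus_one by blast
  then show False using root_imp_reducible_poly[of h "-1"] assms by simp
qed

lemma mult_reciprocal_dvd_if_reflect_poly_eq:
  fixes h f :: "'a::field poly"
  assumes irr: "irreducible h" and "lead_coeff h = 1" "degree h \<ge> 2" "reciprocal h \<noteq> h"
    and "h dvd f" "reflect_poly f = f"
  shows "h * reciprocal h dvd f"
proof -
  have c0: "coeff h 0 \<noteq> 0" using coeff_0_nonzero_if_irreducible[OF irr assms(3)] .
  obtain k where k: "f = h * k" using assms(5) by (auto elim: dvdE)
  have "prime_elem (reciprocal h)"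
    using field_poly_irreducible_imp_prime irreducible_reciprocal[OF irr c0] by blast
  moreover have "reciprocal h dvd h * k"
    using reciprocal_dvd_if_reflect_poly_eq[OF assms(5,6) c0] k by simp
  moreover have "\<not> reciprocal h dvd h"
    using monic_irreducible_dvd_imp_eq[OF irr irreducible_reciprocal[OF irr c0] assms(2)
        lead_coeff_reciprocal[OF c0]] assms(4)
    by auto
  ultimately have "reciprocal h dvd k" using prime_elem_dvd_mult_iff by blast
  then show ?thesis using k by simp
qed

lemma monic_irreducible_dvd_mult_reciprocal:
  fixes h k :: "'a::field poly"
  assumes irr: "irreducible h" "lead_coeff h = 1" "degree h \<ge> 2"
    and "irreducible k" "lead_coeff k = 1" "k dvd h * reciprocal h"
  shows "k = h \<or> k = reciprocal h"
proof -
  have c0: "coeff h 0 \<noteq> 0" using coeff_0_nonzero_if_irreducible[OF assms(1,3)] .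
  have "k dvd h \<or> k dvd reciprocal h"
    using field_poly_irreducible_imp_prime[OF assms(4)] assms(6) prime_elem_dvd_mult_iff by blast
  then show ?thesis
    using monic_irreducible_dvd_imp_eq[OF assms(1,4,2,5)]
      monic_irreducible_dvd_imp_eq[OF irreducible_reciprocal[OF assms(1) c0] assms(4)
        lead_coeff_reciprocal[OF c0] assms(5)]
    by auto
qed

section \<open>Factorization of the transform of an irreducible polynomial\<close>

lemma poly_sr_transform_nonzero:
  fixes g :: "'a::field poly"
  assumes "irreducible g" "degree g = n" "n \<ge> 2"
  shows "poly (sr_transform n g) x \<noteq> 0"
proof
  assume root: "poly (sr_transform n g) x = 0"
  have "g \<noteq> 0" using assms(1) by auto
  then have "x \<noteq> 0" using root assms(2) by (auto simp: poly_0_coeff_0)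
  then have "poly g (x + inverse x) = 0" using root poly_sr_transform[of x g n] assms(2) by simp
  then show False using root_imp_reducible_poly[of g] assms by simp
qed

lemma irreducibleI_sr_transform:
  fixes g :: "'a::field poly"
  assumes "degree g > 0"
    and "\<And>a b. g = a * b \<Longrightarrow> degree a > 0 \<Longrightarrow> degree b > 0 \<Longrightarrow>
           sr_transform (degree g) g = sr_transform (degree a) a * sr_transform (degree b) b \<Longrightarrow> False"
  shows "irreducible g"
proof (rule irreducibleI)
  show "g \<noteq> 0" using assms(1) by auto
  then show "\<not> is_unit g" using assms(1) by (simp add: is_unit_iff_degree)
  fix a b assume ab: "g = a * b"
  then have "a \<noteq> 0" "b \<noteq> 0" using \<open>g \<noteq> 0\<close> by auto
  then show "is_unit a \<or> is_unit b"
    using assms(2)[OF ab] sr_transform_mult_degree[of a b] ab by (auto simp: is_unit_iff_degree)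
qed

lemma irreducible_if_sr_transform_irreducible:
  fixes g :: "'a::field poly"
  assumes "irreducible (sr_transform (degree g) g)"
  shows "irreducible g"
proof (rule irreducibleI_sr_transform)
  have "g \<noteq> 0" using assms by (auto simp: sr_transform_def)
  show "degree g > 0"
  proof (rule ccontr)
    assume "\<not> degree g > 0"
    then have "degree (sr_transform (degree g) g) = 0"
      using \<open>g \<noteq> 0\<close> leading_coeff_0_iff[of g] degree_sr_transform[of g "degree g"] by simp
    moreover have "sr_transform (degree g) g \<noteq> 0" using assms by auto
    ultimately show False
      using irreducible_not_unit[OF assms] by (simp add: is_unit_iff_degree)
  qed
  fix a b assume "g = a * b" "degree a > 0" "degree b > 0"
    and T: "sr_transform (degree g) g = sr_transform (degree a) a * sr_transform (degree b) b"
  then have "a \<noteq> 0" "b \<noteq> 0" by auto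
  then have "degree (sr_transform (degree a) a) > 0" "degree (sr_transform (degree b) b) > 0"
    using \<open>degree a > 0\<close> \<open>degree b > 0\<close> by (simp_all add: degree_sr_transform)
  moreover from this have "sr_transform (degree a) a \<noteq> 0" "sr_transform (degree b) b \<noteq> 0" by auto
  ultimately show False
    using irreducibleD[OF assms T] by (auto simp: is_unit_iff_degree)
qed

lemma irreducible_if_sr_transform_eq_mult_reciprocal:
  fixes g h :: "'a::field poly"
  assumes irr: "irreducible h" and "lead_coeff h = 1" "degree h \<ge> 2" "reciprocal h \<noteq> h"
    and T: "sr_transform (degree g) g = h * reciprocal h"
  shows "irreducible g"
proof (rule irreducibleI_sr_transform)
  have c0: "coeff h 0 \<noteq> 0" using coeff_0_nonzero_if_irreducible[OF irr assms(3)] .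
  have "g \<noteq> 0" using T c0 by (auto simp: sr_transform_def reciprocal_def)
  then have deg: "degree g = degree h"
    using arg_cong[OF T, of degree] by (simp add: degree_sr_transform degree_mult_reciprocal[OF c0])
  then show "degree g > 0" using assms(3) by simp
  have bound: "degree h \<le> degree p" if "p \<noteq> 0" "h dvd sr_transform (degree p) p" for p :: "'a poly"
  proof -
    have "h * reciprocal h dvd sr_transform (degree p) p"
      using mult_reciprocal_dvd_if_reflect_poly_eq[OF irr assms(2-4) that(2)] that(1)
      by (simp add: reflect_poly_sr_transform)
    then have "2 * degree h \<le> 2 * degree p"
      using dvd_imp_degree_le[of _ "sr_transform (degree p) p"] sr_transform_eq_0_iff[of p "degree p"] that(1)
      by (fastforce simp: degree_sr_transform degree_mult_reciprocal[OF c0])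
    then show ?thesis by simp
  qed
  fix a b assume ab: "g = a * b" "degree a > 0" "degree b > 0"
    and "sr_transform (degree g) g = sr_transform (degree a) a * sr_transform (degree b) b"
  then have "h dvd sr_transform (degree a) a * sr_transform (degree b) b" using T by simp
  then have "h dvd sr_transform (degree a) a \<or> h dvd sr_transform (degree b) b"
    using field_poly_irreducible_imp_prime[OF irr] prime_elem_dvd_mult_iff by blast
  moreover have "a \<noteq> 0" "b \<noteq> 0" using ab \<open>g \<noteq> 0\<close> by auto
  moreover have "degree a + degree b = degree h" using ab deg \<open>g \<noteq> 0\<close> by (simp add: degree_mult_eq)
  ultimately show False using bound[of a] bound[of b] ab by auto
qed

lemma self_reciprocal_dvd_sr_transform_imp_eq:
  fixes g q :: "'a::field poly"
  assumes irr: "irreducible g" and "lead_coeff g = 1" and dvd: "q dvd sr_transform (degree g) g"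
    and "lead_coeff q = 1" "reflect_poly q = q" "even (degree q)" "degree q > 0"
  shows "q = sr_transform (degree g) g"
proof -
  define f where "f = sr_transform (degree g) g"
  have "lead_coeff f = 1" "degree f = 2 * degree g" "reflect_poly f = f"
    using assms(2) by (simp_all add: f_def lead_coeff_sr_transform degree_sr_transform reflect_poly_sr_transform)
  obtain k where fk: "f = q * k" using dvd by (auto simp: f_def elim: dvdE)
  have "q \<noteq> 0" "k \<noteq> 0" using fk \<open>lead_coeff f = 1\<close> by auto
  have "q * reflect_poly k = q * k" using \<open>reflect_poly f = f\<close> fk assms(5) by (metis reflect_poly_mult)
  then have rk: "reflect_poly k = k" using \<open>q \<noteq> 0\<close> by simp
  obtain e where e: "degree q = 2 * e" using assms(6) by blast
  obtain g1 where g1: "degree g1 = e" "lead_coeff g1 = 1" "sr_transform e g1 = q"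
    using self_reciprocal_imp_sr_transform[OF assms(5) \<open>q \<noteq> 0\<close> e] assms(4) by auto
  have "degree f = degree q + degree k" using fk \<open>q \<noteq> 0\<close> \<open>k \<noteq> 0\<close> by (simp add: degree_mult_eq)
  then have dk: "degree k = 2 * (degree g - e)" and "e \<le> degree g" using \<open>degree f = 2 * degree g\<close> e by auto
  obtain g2 where g2: "degree g2 = degree g - e" "sr_transform (degree g - e) g2 = k"
    using self_reciprocal_imp_sr_transform[OF rk \<open>k \<noteq> 0\<close> dk] by metis
  have "g1 \<noteq> 0" using g1 by auto
  then have "\<not> is_unit g1" using g1 e assms(7) by (simp add: is_unit_iff_degree)
  moreover have "sr_transform (degree g) (g1 * g2) = f"
    using sr_transform_mult[of g1 e g2 "degree g - e"] g1 g2 fk \<open>e \<le> degree g\<close> by simp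
  then have "g = g1 * g2"
    using sr_transform_inj[of g "degree g" "g1 * g2"] g1 g2 degree_mult_le[of g1 g2] \<open>e \<le> degree g\<close>
    by (simp add: f_def)
  ultimately have "is_unit g2" using irreducibleD[OF irr] by blast
  moreover from this have "g2 \<noteq> 0" by auto
  ultimately have "degree g2 = 0" using is_unit_iff_degree by blast
  then have "degree k = 0" using dk g2 by simp
  moreover have "lead_coeff k = 1" using \<open>lead_coeff f = 1\<close> fk assms(4) by (simp add: lead_coeff_mult)
  ultimately have "k = 1" by (auto elim: degree_eq_zeroE)
  then show ?thesis using fk by (simp add: f_def)
qed

lemma sr_transform_irreducible_or_mult_reciprocal:
  fixes g :: "'a::field poly"
  assumes irr: "irreducible g" and "lead_coeff g = 1" "degree g \<ge> 2"
  shows "irreducible (sr_transform (degree g) g) \<or>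
    (\<exists>h. irreducible h \<and> lead_coeff h = 1 \<and> degree h = degree g \<and> reciprocal h \<noteq> h \<and>
         sr_transform (degree g) g = h * reciprocal h)"
proof -
  define f where "f = sr_transform (degree g) g"
  have f: "degree f = 2 * degree g" "reflect_poly f = f" "lead_coeff f = 1"
    using assms(2) by (simp_all add: f_def degree_sr_transform reflect_poly_sr_transform lead_coeff_sr_transform)
  then obtain h where h: "irreducible h" "lead_coeff h = 1" "h dvd f"
    using monic_irreducible_factor_exists[of f] assms(3) by auto
  have "h \<noteq> 0" "\<not> is_unit h" using h(1) irreducible_not_unit by auto
  then have "degree h \<noteq> 0" by (simp add: is_unit_iff_degree)
  moreover have "degree h \<noteq> 1"
  proof
    assume "degree h = 1"
    then obtain x where "poly h x = 0" using degree_one_imp_root by blast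
    then have "poly f x = 0" using h(3) by (auto elim: dvdE)
    then show False using poly_sr_transform_nonzero[OF irr refl assms(3)] by (simp add: f_def)
  qed
  ultimately have "degree h \<ge> 2" by linarith
  have c0: "coeff h 0 \<noteq> 0" using coeff_0_nonzero_if_irreducible[OF h(1) \<open>degree h \<ge> 2\<close>] .
  show ?thesis
  proof (cases "reciprocal h = h")
    case True
    then have "reflect_poly h = h"
      using reflect_poly_eq_if_reciprocal_eq[OF h(1,2) \<open>degree h \<ge> 2\<close>] by blast
    then have "h = f"
      using self_reciprocal_dvd_sr_transform_imp_eq[OF irr assms(2), of h] h \<open>degree h \<ge> 2\<close>
        even_degree_if_reflect_poly_eq[OF h(1) \<open>degree h \<ge> 2\<close>] by (simp add: f_def)
    then show ?thesis using h(1) by (simp add: f_def)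
  next
    case False
    have "h * reciprocal h dvd f"
      using mult_reciprocal_dvd_if_reflect_poly_eq[OF h(1,2) \<open>degree h \<ge> 2\<close> False h(3) f(2)] .
    moreover note lead_coeff_mult_reciprocal[OF h(2) c0]
    ultimately have "h * reciprocal h = f"
      using self_reciprocal_dvd_sr_transform_imp_eq[OF irr assms(2), of "h * reciprocal h"] c0
        \<open>degree h \<ge> 2\<close> by (simp add: f_def reflect_poly_mult_reciprocal degree_mult_reciprocal)
    moreover from this have "degree h = degree g" using f(1) degree_mult_reciprocal[OF c0] by simp
    ultimately show ?thesis using h(1,2) False by (auto simp: f_def)
  qed
qed

section \<open>Coefficient vectors\<close>

definition top_coeffs :: "nat \<Rightarrow> nat \<Rightarrow> 'a::zero poly \<Rightarrow> 'a list" where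
  "top_coeffs l d f = map (topc f d) [1..<Suc l]"

definition low_coeffs :: "nat \<Rightarrow> 'a::zero poly \<Rightarrow> 'a list" where
  "low_coeffs l f = map (coeff f) [0..<l]"

lemma length_top_coeffs [simp]: "length (top_coeffs l d f) = l"
  by (simp add: top_coeffs_def)

lemma length_low_coeffs [simp]: "length (low_coeffs l f) = l"
  by (simp add: low_coeffs_def)

lemma nth_top_coeffs [simp]: "i < l \<Longrightarrow> top_coeffs l d f ! i = topc f d (Suc i)"
  by (simp add: top_coeffs_def del: upt_Suc)

lemma nth_low_coeffs [simp]: "i < l \<Longrightarrow> low_coeffs l f ! i = coeff f i"
  by (simp add: low_coeffs_def)

lemma top_coeffs_eq_iff:
  "top_coeffs (length a) d f = a \<longleftrightarrow> (\<forall>j\<in>{1..length a}. topc f d j = a ! (j - 1))"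
proof -
  have "top_coeffs (length a) d f = a \<longleftrightarrow> (\<forall>i<length a. topc f d (Suc i) = a ! i)"
    by (simp add: list_eq_iff_nth_eq)
  also have "\<dots> \<longleftrightarrow> (\<forall>j\<in>{1..length a}. topc f d j = a ! (j - 1))"
  proof
    assume H: "\<forall>i<length a. topc f d (Suc i) = a ! i"
    show "\<forall>j\<in>{1..length a}. topc f d j = a ! (j - 1)"
    proof
      fix j assume "j \<in> {1..length a}"
      then have "j = Suc (j - 1)" "j - 1 < length a" by auto
      then show "topc f d j = a ! (j - 1)" using H by metis
    qed
  qed force
  finally show ?thesis .
qed

lemma low_coeffs_eq_iff: "low_coeffs (length b) f = b \<longleftrightarrow> (\<forall>j<length b. coeff f j = b ! j)"
  by (simp add: list_eq_iff_nth_eq)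

lemma topc_eq_coeff_reflect_poly: "degree p = d \<Longrightarrow> topc p d k = coeff (reflect_poly p) k"
  by (simp add: topc_def coeff_reflect_poly)

lemma ibinom_0 [simp]: "ibinom m 0 = 1"
  by (simp add: ibinom_def)

lemma length_phi [simp]: "length (phi n g) = length g"
  by (simp add: phi_def del: upt_Suc)

lemma nth_phi:
  "i < length g \<Longrightarrow> phi n g ! i =
     (\<Sum>j\<in>{0..Suc i div 2}. of_int (ibinom (int n + 2 * int j - int (Suc i)) j) *
        (if Suc i - 2 * j = 0 then 1 else g ! (Suc i - 2 * j - 1)))"
proof -
  assume i: "i < length g"
  then have l: "i < length [1..<length g + 1]" and u: "[1..<length g + 1] ! i = Suc i"
    by (simp_all del: upt_Suc)
  show ?thesis unfolding phi_def nth_map[OF l] u by simp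
qed

lemma length_psi [simp]: "length (psi b a) = length a"
  by (simp add: psi_def del: upt_Suc)

lemma nth_psi:
  "i < length a \<Longrightarrow> psi b a ! i =
     a ! i + inverse (b ! 0) * b ! Suc i + inverse (b ! 0) * (\<Sum>j\<in>{1..<Suc i}. a ! (j - 1) * b ! (Suc i - j))"
  by (simp add: psi_def del: upt_Suc)

lemma inj_on_unitriangular:
  fixes f :: "'a::ab_group_add list \<Rightarrow> 'a list"
  assumes "\<And>x y i. length x = l \<Longrightarrow> length y = l \<Longrightarrow> i < l \<Longrightarrow> (\<And>j. j < i \<Longrightarrow> x ! j = y ! j) \<Longrightarrow>
      f x ! i - x ! i = f y ! i - y ! i"
  shows "inj_on f {x. length x = l}"
proof (rule inj_onI)
  fix x y assume x: "x \<in> {x. length x = l}" and y: "y \<in> {x. length x = l}" and eq: "f x = f y"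
  show "x = y"
  proof (rule nth_equalityI)
    show "length x = length y" using x y by simp
    fix i assume "i < length x"
    then show "x ! i = y ! i"
    proof (induction i rule: less_induct)
      case (less i)
      then have "f x ! i - x ! i = f y ! i - y ! i" using assms[of x y i] x y by auto
      then show ?case using eq by simp
    qed
  qed
qed

lemma inj_on_phi: "inj_on (phi n) {g :: 'a::field list. length g = l}"
proof (rule inj_on_unitriangular)
  fix g g' :: "'a list" and i
  assume len: "length g = l" "length g' = l" "i < l" and agree: "\<And>j. j < i \<Longrightarrow> g ! j = g' ! j"
  define T where "T h j = of_int (ibinom (int n + 2 * int j - int (Suc i)) j) *
      (if Suc i - 2 * j = 0 then (1::'a) else h ! (Suc i - 2 * j - 1))" for h j
  have split: "phi n h ! i - h ! i = (\<Sum>j\<in>{Suc 0..Suc i div 2}. T h j)" if "i < length h" for h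
    using that by (simp add: nth_phi T_def sum.atLeast_Suc_atMost)
  have "(\<Sum>j\<in>{Suc 0..Suc i div 2}. T g j) = (\<Sum>j\<in>{Suc 0..Suc i div 2}. T g' j)"
    using agree by (intro sum.cong refl) (auto simp: T_def)
  then show "phi n g ! i - g ! i = phi n g' ! i - g' ! i" using split[of g] split[of g'] len by simp
qed

lemma inj_on_psi: "inj_on (psi b) {a :: 'a::field list. length a = l}"
proof (rule inj_on_unitriangular)
  fix a a' :: "'a list" and i
  assume "length a = l" "length a' = l" "i < l" and agree: "\<And>j. j < i \<Longrightarrow> a ! j = a' ! j"
  moreover have "(\<Sum>j\<in>{1..<Suc i}. a ! (j - 1) * b ! (Suc i - j)) =
      (\<Sum>j\<in>{1..<Suc i}. a' ! (j - 1) * b ! (Suc i - j))"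
    using agree by (intro sum.cong refl) auto
  ultimately show "psi b a ! i - a ! i = psi b a' ! i - a' ! i" by (simp add: nth_psi)
qed

lemma inv_into_eq_iff_of_bij_betw:
  "bij_betw f A A \<Longrightarrow> a \<in> A \<Longrightarrow> c \<in> A \<Longrightarrow> a = inv_into A f c \<longleftrightarrow> f a = c"
  by (auto simp: bij_betw_inv_into_left bij_betw_inv_into_right)

lemma bij_betw_lists_of_length:
  fixes f :: "'a::finite list \<Rightarrow> 'a list"
  assumes "inj_on f {xs. length xs = l}" "\<And>xs. length (f xs) = length xs"
  shows "bij_betw f {xs. length xs = l} {xs. length xs = l}"
proof -
  have "f ` {xs. length xs = l} = {xs. length xs = l}"
    by (rule endo_inj_surj) (use assms finite_list_length in auto)
  then show ?thesis using assms(1) by (simp add: bij_betw_def)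
qed

lemma phi_inv_eq_iff:
  fixes a c :: "'a::{finite,field} list"
  assumes "length a = length c"
  shows "a = phi_inv n c \<longleftrightarrow> phi n a = c"
  unfolding phi_inv_def
  using inv_into_eq_iff_of_bij_betw[OF bij_betw_lists_of_length[OF inj_on_phi[of n "length c"]], of a c] assms
  by simp

lemma psi_inv_eq_iff:
  fixes a b c :: "'a::{finite,field} list"
  assumes "length a = length c"
  shows "a = psi_inv b c \<longleftrightarrow> psi b a = c"
  unfolding psi_inv_def
  using inv_into_eq_iff_of_bij_betw[OF bij_betw_lists_of_length[OF inj_on_psi[of b "length c"]], of a c] assms
  by simp

lemma length_phi_inv [simp]: "length (phi_inv n (c :: 'a::{finite,field} list)) = length c"
  unfolding phi_inv_def
  using bij_betw_imp_surj_on[OF bij_betw_inv_into[OF bij_betw_lists_of_length[OF inj_on_phi[of n "length c"]]]]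
  by auto

lemma length_psi_inv [simp]: "length (psi_inv b (c :: 'a::{finite,field} list)) = length c"
  unfolding psi_inv_def
  using bij_betw_imp_surj_on[OF bij_betw_inv_into[OF bij_betw_lists_of_length[OF inj_on_psi[of b "length c"]]]]
  by auto

lemma phi_top_coeffs:
  fixes g :: "'a::field poly"
  assumes "lead_coeff g = 1" "degree g = n"
  shows "phi n (top_coeffs l n g) = top_coeffs l (2 * n) (sr_transform n g)"
proof (rule nth_equalityI)
  fix i assume "i < length (phi n (top_coeffs l n g))"
  then have i: "i < l" by simp
  have "phi n (top_coeffs l n g) ! i =
      (\<Sum>j\<in>{0..Suc i div 2}. of_int (ibinom (int n + 2 * int j - int (Suc i)) j) *
        (if Suc i - 2 * j = 0 then 1 else top_coeffs l n g ! (Suc i - 2 * j - 1)))"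
    using i by (intro nth_phi) simp
  also have "\<dots> = (\<Sum>j\<le>Suc i div 2. of_nat ((n + 2 * j - Suc i) choose j) * topc g n (Suc i - 2 * j))"
    unfolding atLeast0AtMost
  proof (rule sum.cong[OF refl])
    fix j assume j: "j \<in> {..Suc i div 2}"
    have top: "(if Suc i - 2 * j = 0 then 1 else top_coeffs l n g ! (Suc i - 2 * j - 1)) =
        topc g n (Suc i - 2 * j)"
    proof (cases "Suc i - 2 * j = 0")
      case True
      then show ?thesis using assms by (simp add: topc_def)
    next
      case False
      then have "Suc i - 2 * j - 1 < l" "Suc (Suc i - 2 * j - 1) = Suc i - 2 * j" using i by auto
      then show ?thesis using False by (simp only: nth_top_coeffs if_False)
    qed
    show "of_int (ibinom (int n + 2 * int j - int (Suc i)) j) *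
        (if Suc i - 2 * j = 0 then 1 else top_coeffs l n g ! (Suc i - 2 * j - 1)) =
        of_nat ((n + 2 * j - Suc i) choose j) * topc g n (Suc i - 2 * j)"
    proof (cases "Suc i - 2 * j \<le> n")
      case True
      then have "int n + 2 * int j - int (Suc i) = int (n + 2 * j - Suc i)" using j by auto
      then show ?thesis by (simp only: top ibinom_def of_int_of_nat_eq nat_int of_nat_0_le_iff if_True)
    next
      case False
      then have "topc g n (Suc i - 2 * j) = 0" by (simp add: topc_def)
      then show ?thesis by (simp only: top) simp
    qed
  qed
  also have "\<dots> = coeff (sr_transform n g) (Suc i)" by (simp add: coeff_sr_transform)
  also have "\<dots> = top_coeffs l (2 * n) (sr_transform n g) ! i"
    using i assms by (simp add: topc_eq_coeff_reflect_poly degree_sr_transform reflect_poly_sr_transform)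
  finally show "phi n (top_coeffs l n g) ! i = top_coeffs l (2 * n) (sr_transform n g) ! i" .
qed simp

lemma psi_top_coeffs:
  fixes h :: "'a::field poly"
  assumes "lead_coeff h = 1" "degree h = n" and c0: "coeff h 0 \<noteq> 0"
  shows "psi (low_coeffs (Suc l) h) (top_coeffs l n h) = top_coeffs l (2 * n) (h * reciprocal h)"
proof (rule nth_equalityI)
  fix i assume "i < length (psi (low_coeffs (Suc l) h) (top_coeffs l n h))"
  then have i: "i < l" by simp
  define c where "c = inverse (coeff h 0)"
  define f where "f j = topc h n j * coeff h (Suc i - j)" for j
  have "h * reciprocal h = smult c (reflect_poly h * h)" by (simp add: reciprocal_def c_def mult.commute)
  then have "coeff (h * reciprocal h) (Suc i) = c * (\<Sum>j\<le>Suc i. f j)"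
    by (simp add: coeff_mult f_def topc_eq_coeff_reflect_poly[OF assms(2)])
  also have "(\<Sum>j\<le>Suc i. f j) = f 0 + (\<Sum>j\<in>{1..Suc i}. f j)"
    by (simp add: atMost_atLeast0 sum.atLeast_Suc_atMost)
  also have "(\<Sum>j\<in>{1..Suc i}. f j) = f (Suc i) + (\<Sum>j\<in>{1..<Suc i}. f j)"
    by (rule sum.last_plus) simp
  also have "f 0 = coeff h (Suc i)" using assms(1,2) by (simp add: f_def topc_def)
  finally have R: "coeff (h * reciprocal h) (Suc i) =
      c * (coeff h (Suc i) + (f (Suc i) + (\<Sum>j\<in>{1..<Suc i}. f j)))" .
  have "(\<Sum>j\<in>{1..<Suc i}. top_coeffs l n h ! (j - 1) * low_coeffs (Suc l) h ! (Suc i - j)) =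
      (\<Sum>j\<in>{1..<Suc i}. f j)"
    using i by (intro sum.cong refl) (auto simp: f_def)
  then have "psi (low_coeffs (Suc l) h) (top_coeffs l n h) ! i =
      topc h n (Suc i) + c * coeff h (Suc i) + c * (\<Sum>j\<in>{1..<Suc i}. f j)"
    using i by (simp add: nth_psi c_def)
  also have "\<dots> = coeff (h * reciprocal h) (Suc i)"
    using R c0 by (simp add: f_def c_def field_simps)
  also have "\<dots> = top_coeffs l (2 * n) (h * reciprocal h) ! i"
    using i c0 assms(2)
    by (simp add: topc_eq_coeff_reflect_poly degree_mult_reciprocal reflect_poly_mult_reciprocal)
  finally show "psi (low_coeffs (Suc l) h) (top_coeffs l n h) ! i = top_coeffs l (2 * n) (h * reciprocal h) ! i" .
qed simp

lemma low_coeffs_self_reciprocal: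
  fixes h :: "'a::field poly"
  assumes "reflect_poly h = h" "lead_coeff h = 1" "degree h = n"
  shows "low_coeffs (Suc l) h = 1 # top_coeffs l n h"
proof (rule nth_equalityI)
  fix i assume "i < length (low_coeffs (Suc l) h)"
  moreover have "coeff h 0 = 1" using coeff_0_reflect_poly[of h] assms(1,2) by simp
  ultimately show "low_coeffs (Suc l) h ! i = (1 # top_coeffs l n h) ! i"
    using assms by (cases i) (simp_all add: topc_eq_coeff_reflect_poly)
qed simp

section \<open>Counting\<close>

lemma card_eq_sum_card_fibres:
  assumes "finite A" "finite B" "f ` A \<subseteq> B"
  shows "card A = (\<Sum>b\<in>B. card {a\<in>A. f a = b})"
proof -
  have "{b\<in>B. f a = b} = {f a}" if "a \<in> A" for a using that assms(3) by auto
  then show ?thesis using sum_multicount_gen[OF assms(2,1), of "\<lambda>b a. f a = b" "\<lambda>_. 1"] by simp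
qed

lemma card_eq_twice_card_image:
  assumes "finite A" "\<And>a. a \<in> A \<Longrightarrow> card {x\<in>A. f x = f a} = 2"
  shows "card A = 2 * card (f ` A)"
proof -
  have "card A = (\<Sum>b\<in>f ` A. card {a\<in>A. f a = b})"
    using assms(1) by (intro card_eq_sum_card_fibres) auto
  also have "\<dots> = (\<Sum>b\<in>f ` A. 2)" using assms(2) by (intro sum.cong) auto
  finally show ?thesis by simp
qed

lemma finite_degree_le: "finite {f :: 'a::{finite,zero} poly. degree f \<le> d}"
proof (rule finite_subset)
  show "{f :: 'a poly. degree f \<le> d} \<subseteq> Poly ` {xs. length xs = Suc d}"
  proof
    fix f :: "'a poly" assume "f \<in> {f. degree f \<le> d}"
    then have "f = Poly (map (coeff f) [0..<Suc d])"
      by (intro poly_eqI) (auto simp: coeff_Poly_eq nth_default_def coeff_eq_0 simp del: upt_Suc)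
    then show "f \<in> Poly ` {xs. length xs = Suc d}" by (intro image_eqI) auto
  qed
qed (simp add: finite_list_length)

definition monic_irreducibles :: "nat \<Rightarrow> 'a::field poly set" where
  "monic_irreducibles d = {f. lead_coeff f = 1 \<and> degree f = d \<and> irreducible f}"

lemma finite_monic_irreducibles [simp]: "finite (monic_irreducibles d :: 'a::{finite,field} poly set)"
  by (rule finite_subset[OF _ finite_degree_le[of d]]) (auto simp: monic_irreducibles_def)

lemma I_count_eq_card:
  "I_count d a b =
     card {f \<in> monic_irreducibles d. top_coeffs (length a) d f = a \<and> low_coeffs (length b) f = b}"
  by (simp add: I_count_def monic_irreducibles_def top_coeffs_eq_iff low_coeffs_eq_iff conj_assoc)

lemma S_count_eq_card:
  "S_count n c =
     card {f \<in> monic_irreducibles (2 * n). reflect_poly f = f \<and> top_coeffs (length c) (2 * n) f = c}"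
  by (simp add: S_count_def monic_irreducibles_def top_coeffs_eq_iff conj_assoc)

lemma I_count_phi_inv:
  fixes c :: "'a::{finite,field} list"
  shows "I_count n (phi_inv n c) [] =
    card {g \<in> monic_irreducibles n. top_coeffs (length c) (2 * n) (sr_transform n g) = c}"
  unfolding I_count_eq_card
proof (intro arg_cong[of _ _ card] Collect_cong conj_cong refl)
  fix g :: "'a poly" assume "g \<in> monic_irreducibles n"
  then have "lead_coeff g = 1" "degree g = n" unfolding monic_irreducibles_def by blast+
  then show "(top_coeffs (length (phi_inv n c)) n g = phi_inv n c \<and> low_coeffs (length []) g = []) \<longleftrightarrow>
      top_coeffs (length c) (2 * n) (sr_transform n g) = c"
    by (simp add: phi_inv_eq_iff phi_top_coeffs low_coeffs_def)
qed

definition reciprocal_pair_factors :: "nat \<Rightarrow> 'a::field list \<Rightarrow> 'a poly set" where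
  "reciprocal_pair_factors n c =
     {h \<in> monic_irreducibles n. top_coeffs (length c) (2 * n) (h * reciprocal h) = c}"

lemma finite_reciprocal_pair_factors [simp]:
  "finite (reciprocal_pair_factors n (c :: 'a::{finite,field} list))"
  by (simp add: reciprocal_pair_factors_def)

lemma card_non_self_reciprocal_pair_factors:
  fixes c :: "'a::{finite,field} list"
  assumes "n \<ge> 2"
  defines "P \<equiv> {h \<in> reciprocal_pair_factors n c. reflect_poly h \<noteq> h}"
  shows "card P = 2 * card ((\<lambda>h. h * reciprocal h) ` P)"
proof (rule card_eq_twice_card_image)
  show "finite P" by (simp add: P_def)
  fix h assume "h \<in> P"
  then have h: "irreducible h" "lead_coeff h = 1" "degree h = n" "reflect_poly h \<noteq> h"
    "top_coeffs (length c) (2 * n) (h * reciprocal h) = c"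
    by (auto simp: P_def reciprocal_pair_factors_def monic_irreducibles_def)
  have d2: "degree h \<ge> 2" using h(3) assms(1) by simp
  have c0: "coeff h 0 \<noteq> 0" using coeff_0_nonzero_if_irreducible[OF h(1) d2] .
  have "reciprocal h \<noteq> h" using reflect_poly_eq_if_reciprocal_eq[OF h(1,2) d2] h(4) by blast
  have rr: "reciprocal (reciprocal h) = h" using c0 h(2) by simp
  have "reciprocal h \<in> P"
  proof -
    have "reflect_poly (reciprocal h) \<noteq> reciprocal h"
      using reciprocal_eq_self_if_reflect_poly_eq[OF _ lead_coeff_reciprocal[OF c0]] rr
        \<open>reciprocal h \<noteq> h\<close> by metis
    then show ?thesis
      using h irreducible_reciprocal[OF h(1) c0] lead_coeff_reciprocal[OF c0] c0
      by (simp add: P_def reciprocal_pair_factors_def monic_irreducibles_def mult.commute[of "reciprocal h"])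
  qed
  have "{x \<in> P. x * reciprocal x = h * reciprocal h} = {h, reciprocal h}"
  proof (intro equalityI subsetI)
    fix x assume "x \<in> {x \<in> P. x * reciprocal x = h * reciprocal h}"
    then have "irreducible x" "lead_coeff x = 1" "x dvd h * reciprocal h"
      by (auto simp: P_def reciprocal_pair_factors_def monic_irreducibles_def intro: dvdI[of _ x "reciprocal x"])
    then show "x \<in> {h, reciprocal h}" using monic_irreducible_dvd_mult_reciprocal[OF h(1,2) d2] by auto
  next
    fix x assume "x \<in> {h, reciprocal h}"
    then show "x \<in> {x \<in> P. x * reciprocal x = h * reciprocal h}"
      using \<open>h \<in> P\<close> \<open>reciprocal h \<in> P\<close> rr by (auto simp: mult.commute)
  qed
  then show "card {x \<in> P. x * reciprocal x = h * reciprocal h} = 2"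
    using \<open>reciprocal h \<noteq> h\<close> by simp
qed

lemma sr_transform_image_irreducibles:
  fixes c :: "'a::field list"
  assumes "n \<ge> 2"
  shows "sr_transform n ` {g \<in> monic_irreducibles n. top_coeffs (length c) (2 * n) (sr_transform n g) = c} =
    {f \<in> monic_irreducibles (2 * n). reflect_poly f = f \<and> top_coeffs (length c) (2 * n) f = c} \<union>
    (\<lambda>h. h * reciprocal h) ` {h \<in> reciprocal_pair_factors n c. reflect_poly h \<noteq> h}"
    (is "sr_transform n ` ?G = ?S \<union> (\<lambda>h. h * reciprocal h) ` ?P")
proof (intro equalityI subsetI)
  fix f assume "f \<in> sr_transform n ` ?G"
  then obtain g where g: "irreducible g" "lead_coeff g = 1" "degree g = n"
    "top_coeffs (length c) (2 * n) (sr_transform n g) = c" "f = sr_transform n g"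
    by (auto simp: monic_irreducibles_def)
  then consider "irreducible f"
    | h where "irreducible h" "lead_coeff h = 1" "degree h = n" "reciprocal h \<noteq> h" "f = h * reciprocal h"
    using sr_transform_irreducible_or_mult_reciprocal[OF g(1,2)] assms by auto
  then show "f \<in> ?S \<union> (\<lambda>h. h * reciprocal h) ` ?P"
  proof cases
    case 1
    then show ?thesis using g
      by (simp add: monic_irreducibles_def lead_coeff_sr_transform degree_sr_transform reflect_poly_sr_transform)
  next
    case (2 h)
    then have "reflect_poly h \<noteq> h" using reciprocal_eq_self_if_reflect_poly_eq by blast
    then show ?thesis using 2 g by (auto simp: reciprocal_pair_factors_def monic_irreducibles_def)
  qed
next
  fix f assume f: "f \<in> ?S \<union> (\<lambda>h. h * reciprocal h) ` ?P"
  have props: "lead_coeff f = 1 \<and> reflect_poly f = f \<and> degree f = 2 * n \<and> top_coeffs (length c) (2 * n) f = c"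
    using f
  proof
    assume "f \<in> (\<lambda>h. h * reciprocal h) ` ?P"
    then obtain h where h: "h \<in> ?P" "f = h * reciprocal h" by blast
    then have "lead_coeff h = 1" "coeff h 0 \<noteq> 0" "degree h = n"
      using coeff_0_nonzero_if_irreducible[of h] assms
      by (auto simp: reciprocal_pair_factors_def monic_irreducibles_def)
    moreover have "top_coeffs (length c) (2 * n) f = c"
      using h by (simp add: reciprocal_pair_factors_def)
    ultimately show ?thesis
      using lead_coeff_mult_reciprocal[of h] reflect_poly_mult_reciprocal[of h] degree_mult_reciprocal[of h]
      by (simp add: h(2))
  qed (unfold monic_irreducibles_def, blast)
  moreover from props have "f \<noteq> 0" by auto
  ultimately obtain g where g: "degree g = n" "lead_coeff g = lead_coeff f" "sr_transform n g = f"
    using self_reciprocal_imp_sr_transform[of f n] by blast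
  have "irreducible g"
    using f
  proof
    assume "f \<in> ?S"
    then show "irreducible g"
      using irreducible_if_sr_transform_irreducible[of g] g by (simp add: monic_irreducibles_def)
  next
    assume "f \<in> (\<lambda>h. h * reciprocal h) ` ?P"
    then obtain h where "h \<in> ?P" "f = h * reciprocal h" by blast
    then have h: "irreducible h" "lead_coeff h = 1" "degree h \<ge> 2" "reflect_poly h \<noteq> h"
      using assms by (auto simp: reciprocal_pair_factors_def monic_irreducibles_def)
    then have "reciprocal h \<noteq> h" using reflect_poly_eq_if_reciprocal_eq by blast
    then show "irreducible g"
      using irreducible_if_sr_transform_eq_mult_reciprocal[OF h(1-3)] g \<open>f = h * reciprocal h\<close> by simp
  qed
  then show "f \<in> sr_transform n ` ?G"
    using g props by (auto simp: monic_irreducibles_def)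
qed

lemma card_sr_transform_irreducibles:
  fixes c :: "'a::{finite,field} list"
  assumes "n \<ge> 2"
  shows "2 * card {g \<in> monic_irreducibles n. top_coeffs (length c) (2 * n) (sr_transform n g) = c} =
    2 * S_count n c + card {h \<in> reciprocal_pair_factors n c. reflect_poly h \<noteq> h}"
    (is "2 * card ?G = 2 * S_count n c + card ?P")
proof -
  let ?S = "{f \<in> monic_irreducibles (2 * n). reflect_poly f = f \<and> top_coeffs (length c) (2 * n) f = c}"
  let ?Q = "(\<lambda>h. h * reciprocal h) ` ?P"
  have "inj_on (sr_transform n) ?G"
    by (rule inj_onI) (auto simp: monic_irreducibles_def intro: sr_transform_inj)
  then have "card ?G = card (?S \<union> ?Q)"
    using card_image sr_transform_image_irreducibles[OF assms, of c] by fastforce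
  also have "?S \<inter> ?Q = {}"
  proof (intro equalityI subsetI)
    fix f assume "f \<in> ?S \<inter> ?Q"
    then obtain h where f: "irreducible f" "f = h * reciprocal h" and h: "irreducible h" "degree h = n"
      by (auto simp: monic_irreducibles_def reciprocal_pair_factors_def)
    then have "coeff h 0 \<noteq> 0" using coeff_0_nonzero_if_irreducible assms by auto
    then have "degree (reciprocal h) = n" "reciprocal h \<noteq> 0" "h \<noteq> 0"
      using h by (auto simp: reciprocal_def)
    then show "f \<in> {}" using irreducibleD[OF f] h assms by (auto simp: is_unit_iff_degree)
  qed simp
  then have "card (?S \<union> ?Q) = card ?S + card ?Q" by (intro card_Un_disjoint) auto
  finally show ?thesis
    using card_non_self_reciprocal_pair_factors[OF assms, of c] by (simp add: S_count_eq_card)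
qed

lemma card_reciprocal_pair_factors:
  fixes c :: "'a::{finite,field} list"
  assumes "n \<ge> 2"
  shows "card (reciprocal_pair_factors n c) =
    (\<Sum>b\<in>{b. length b = length c + 1 \<and> b ! 0 \<noteq> 0}. I_count n (psi_inv b c) b)"
proof -
  let ?B = "{b :: 'a list. length b = length c + 1 \<and> b ! 0 \<noteq> 0}"
  let ?low = "low_coeffs (Suc (length c))"
  have "?low h \<in> ?B" if "h \<in> reciprocal_pair_factors n c" for h
    using that coeff_0_nonzero_if_irreducible[of h] assms
    by (auto simp: reciprocal_pair_factors_def monic_irreducibles_def)
  then have "card (reciprocal_pair_factors n c) =
      (\<Sum>b\<in>?B. card {h \<in> reciprocal_pair_factors n c. ?low h = b})"
    by (intro card_eq_sum_card_fibres) (auto intro: finite_subset[OF _ finite_list_length])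
  also have "\<dots> = (\<Sum>b\<in>?B. I_count n (psi_inv b c) b)"
  proof (intro sum.cong refl)
    fix b assume "b \<in> ?B"
    have "{h \<in> reciprocal_pair_factors n c. ?low h = b} =
        {f \<in> monic_irreducibles n. top_coeffs (length c) n f = psi_inv b c \<and> low_coeffs (length b) f = b}"
    proof (intro Collect_cong)
      fix h
      show "(h \<in> reciprocal_pair_factors n c \<and> ?low h = b) \<longleftrightarrow>
          (h \<in> monic_irreducibles n \<and> top_coeffs (length c) n h = psi_inv b c \<and> low_coeffs (length b) h = b)"
      proof (cases "h \<in> monic_irreducibles n \<and> ?low h = b")
        case True
        then have "lead_coeff h = 1" "degree h = n" "coeff h 0 \<noteq> 0"
          using coeff_0_nonzero_if_irreducible[of h] assms by (auto simp: monic_irreducibles_def)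
        then show ?thesis
          using True \<open>b \<in> ?B\<close> psi_top_coeffs[of h n "length c"]
          by (auto simp: reciprocal_pair_factors_def psi_inv_eq_iff)
      qed (use \<open>b \<in> ?B\<close> in \<open>auto simp: reciprocal_pair_factors_def\<close>)
    qed
    then show "card {h \<in> reciprocal_pair_factors n c. ?low h = b} = I_count n (psi_inv b c) b"
      by (simp add: I_count_eq_card)
  qed
  finally show ?thesis .
qed

lemma card_self_reciprocal_pair_factors:
  fixes c :: "'a::{finite,field} list"
  assumes "n \<ge> 2"
  shows "card {h \<in> reciprocal_pair_factors n c. reflect_poly h = h} =
    (\<Sum>a\<in>{a. length a = length c}. if psi (1 # a) a = c then S_half n a else 0)"
proof (cases "even n")
  case False
  then have empty: "{h \<in> reciprocal_pair_factors n c. reflect_poly h = h} = {}"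
    using even_degree_if_reflect_poly_eq assms by (auto simp: reciprocal_pair_factors_def monic_irreducibles_def)
  show ?thesis unfolding empty using False by (simp add: S_half_def cong: if_cong)
next
  case True
  let ?A = "{a :: 'a list. length a = length c}"
  let ?R = "{h \<in> reciprocal_pair_factors n c. reflect_poly h = h}"
  let ?top = "top_coeffs (length c) n"
  have "card ?R = (\<Sum>a\<in>?A. card {h \<in> ?R. ?top h = a})"
    by (intro card_eq_sum_card_fibres) (auto simp: finite_list_length)
  also have "\<dots> = (\<Sum>a\<in>?A. if psi (1 # a) a = c then S_half n a else 0)"
  proof (intro sum.cong refl)
    fix a assume "a \<in> ?A"
    then have len: "length a = length c" by simp
    have iff: "h \<in> ?R \<and> ?top h = a \<longleftrightarrow>
        psi (1 # a) a = c \<and> h \<in> monic_irreducibles n \<and> reflect_poly h = h \<and> top_coeffs (length a) n h = a"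
      for h
    proof (cases "h \<in> monic_irreducibles n \<and> reflect_poly h = h")
      case True
      then have "lead_coeff h = 1" "degree h = n" "coeff h 0 \<noteq> 0" "reflect_poly h = h"
        using coeff_0_nonzero_if_irreducible[of h] assms by (auto simp: monic_irreducibles_def)
      then have "top_coeffs (length c) (2 * n) (h * reciprocal h) = psi (1 # ?top h) (?top h)"
        using psi_top_coeffs[of h n "length c"] low_coeffs_self_reciprocal[of h n "length c"] by simp
      then have "h \<in> ?R \<longleftrightarrow> psi (1 # ?top h) (?top h) = c"
        using True by (simp add: reciprocal_pair_factors_def)
      then show ?thesis unfolding len using True by metis
    next
      case False
      then show ?thesis unfolding reciprocal_pair_factors_def by blast
    qed
    show "card {h \<in> ?R. ?top h = a} = (if psi (1 # a) a = c then S_half n a else 0)"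
    proof (cases "psi (1 # a) a = c")
      case True
      then have "{h \<in> ?R. ?top h = a} =
          {f \<in> monic_irreducibles n. reflect_poly f = f \<and> top_coeffs (length a) n f = a}"
        using iff by blast
      then show ?thesis using True \<open>even n\<close> by (simp add: S_half_def S_count_eq_card)
    next
      case False
      then have "{h \<in> ?R. ?top h = a} = {}" using iff by blast
      then show ?thesis using False by simp
    qed
  qed
  finally show ?thesis .
qed

theorem theorem1:
  fixes c :: "'a::{finite,field} list" and n :: nat
  assumes "n > 1"
  shows "real (S_count n c) =
     1/2 * (\<Sum>a\<in>{a :: 'a list. length a = length c}.
              (if psi (1 # a) a = c then real (S_half n a) else 0))
     + real (I_count n (phi_inv n c) [])
     - 1/2 * (\<Sum>b\<in>{b :: 'a list. length b = length c + 1 \<and> b ! 0 \<noteq> 0}.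
              real (I_count n (psi_inv b c) b))"
proof -
  have "n \<ge> 2" using assms by simp
  let ?P = "reciprocal_pair_factors n c"
  have "card ?P = card {h \<in> ?P. reflect_poly h = h} + card {h \<in> ?P. reflect_poly h \<noteq> h}"
    by (subst card_Un_disjoint[symmetric]) (auto intro: arg_cong[of _ _ card])
  then have "real (card ?P) =
      real (card {h \<in> ?P. reflect_poly h = h}) + real (card {h \<in> ?P. reflect_poly h \<noteq> h})"
    by simp
  moreover have "(\<Sum>a\<in>{a :: 'a list. length a = length c}. (if psi (1 # a) a = c then real (S_half n a) else 0))
      = real (card {h \<in> ?P. reflect_poly h = h})"
    unfolding card_self_reciprocal_pair_factors[OF \<open>n \<ge> 2\<close>] of_nat_sum by (intro sum.cong) auto
  moreover have "(\<Sum>b\<in>{b :: 'a list. length b = length c + 1 \<and> b ! 0 \<noteq> 0}. real (I_count n (psi_inv b c) b))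
      = real (card ?P)"
    unfolding card_reciprocal_pair_factors[OF \<open>n \<ge> 2\<close>] of_nat_sum ..
  moreover have "2 * real (I_count n (phi_inv n c) []) =
      2 * real (S_count n c) + real (card {h \<in> ?P. reflect_poly h \<noteq> h})"
    using card_sr_transform_irreducibles[OF \<open>n \<ge> 2\<close>, of c] by (simp add: I_count_phi_inv flip: of_nat_mult)
  ultimately show ?thesis by linarith
qed

end
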